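(* Let $p\in(1,2]$, let $u$ be an ancient solution of the half-space problem $u_t-\Delta u=|\nabla u|^p$ in $\mathbb{R}^n_+\times(-\infty,0)$, $u=0$ on $\partial\mathbb{R}^n_+\times(-\infty,0)$, let $\varepsilon>0$ and assume $$M_1:=\sup_{\Gamma_1\times(-\infty,-\varepsilon]}|u|<\infty.$$ Then there is $C=C(n,p,M_1)>0$ such that $|u(x,t)|\le C x_n$ for all $(x,t)\in\Gamma_1\times(-\infty,-\varepsilon]$.
   Context: $\mathbb{R}^n_+:=\{x\in\mathbb{R}^n: x_n>0\}$, $\Gamma_R:=\{x\in\mathbb{R}^n: 0<x_n<R\}$. An ancient solution of the half-space problem is a function $u\in C^{2,1}(Q)\cap C(\overline Q)$, $Q=\mathbb{R}^n_+\times(-\infty,0)$, satisfying the PDE pointwise in $Q$ and $u=0$ pointwise on $\partial\mathbb{R}^n_+\times(-\infty,0)$. *)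

theory Defs
  imports "HOL-Analysis.Analysis"
begin

text \<open>Points of R^n are vectors real^'n; the distinguished "normal" coordinate x_n
  is the coordinate k :: 'n. Time is a separate real variable.\<close>

definition halfspace :: "'n::finite \<Rightarrow> (real^'n) set" where
  "halfspace k = {x. x $ k > 0}"

definition Gamma :: "'n::finite \<Rightarrow> real \<Rightarrow> (real^'n) set" where
  "Gamma k R = {x. 0 < x $ k \<and> x $ k < R}"

definition Qset :: "'n::finite \<Rightarrow> ((real^'n) \<times> real) set" where
  "Qset k = halfspace k \<times> {..<0}"

text \<open>Ancient solution of u_t - Laplace u = |grad u|^p in the half space
  with zero boundary values: u in C^{2,1}(Q) \<inter> C(closure Q).
  ut is the time derivative, Du the spatial gradient, D2 the spatial Hessian
  (row i of D2 is the gradient of the i-th component of Du).\<close>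

definition ancient_sol :: "'n::finite \<Rightarrow> real \<Rightarrow> ((real^'n) \<Rightarrow> real \<Rightarrow> real) \<Rightarrow> bool" where
  "ancient_sol k p u \<longleftrightarrow>
     continuous_on (closure (Qset k)) (\<lambda>(x,t). u x t) \<and>
     (\<exists>ut Du D2.
        continuous_on (Qset k) (\<lambda>(x,t). ut x t) \<and>
        continuous_on (Qset k) (\<lambda>(x,t). Du x t :: real^'n) \<and>
        continuous_on (Qset k) (\<lambda>(x,t). D2 x t :: real^'n^'n) \<and>
        (\<forall>x t. (x,t) \<in> Qset k \<longrightarrow>
           ((\<lambda>s. u x s) has_real_derivative ut x t) (at t) \<and>
           ((\<lambda>y. u y t) has_derivative (\<lambda>h. Du x t \<bullet> h)) (at x) \<and>
           ((\<lambda>y. Du y t) has_derivative (\<lambda>h. D2 x t *v h)) (at x) \<and>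
           ut x t - (\<Sum>i\<in>UNIV. D2 x t $ i $ i) = norm (Du x t) powr p)) \<and>
     (\<forall>x t. x $ k = 0 \<and> t < 0 \<longrightarrow> u x t = 0)"

end

theory Submission
  imports Defs
begin

text \<open>The barrier \<open>V(s) = ln (1 + (s - s\<^sup>2)/c)\<close> satisfies \<open>-V'' \<ge> 4 + V'\<^sup>2\<close> on \<open>[0,1]\<close>
  when \<open>c \<le> 1/4\<close>, so \<open>V(x\<^sub>n)\<close> is a strict supersolution of \<open>w\<^sub>t - \<Delta>w \<ge> 1 + |\<nabla>w|\<^sup>2 \<ge> |\<nabla>w|\<^sup>p\<close>.
  For \<open>c = e\<^sup>-\<^sup>M/4\<close> it dominates \<open>\<plusminus>u\<close> on \<open>x\<^sub>n = 1/2\<close> and equals \<open>0\<close> on \<open>x\<^sub>n = 0\<close>, hence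
  by comparison on \<open>\<Gamma>\<^sub>1\<^sub>/\<^sub>2\<close> it dominates \<open>\<plusminus>u\<close> there; the unbounded domain is handled by the
  penalisation \<open>\<delta>(|x|\<^sup>2 - t)\<close>, which keeps a positive maximum of the difference away from
  infinity. Finally \<open>V(s) \<le> s/c\<close>.\<close>

lemma DERIV_nonneg_at_left_max:
  fixes g :: "real \<Rightarrow> real"
  assumes "(g has_real_derivative c) (at t)" "\<eta> > 0"
    and "\<And>s. t - \<eta> < s \<Longrightarrow> s \<le> t \<Longrightarrow> g s \<le> g t"
  shows "0 \<le> c"
proof (rule ccontr)
  assume "\<not> 0 \<le> c"
  from DERIV_neg_dec_left[OF assms(1)] this obtain d
    where d: "d > 0" "\<And>h. 0 < h \<Longrightarrow> h < d \<Longrightarrow> g t < g (t - h)" by force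
  define h where "h = min d \<eta> / 2"
  have "0 < h" "h < d" "h < \<eta>" using d assms(2) by (auto simp: h_def)
  then show False using d(2) assms(3)[of "t - h"] by force
qed

lemma DERIV2_nonpos_at_max:
  fixes g g' :: "real \<Rightarrow> real"
  assumes "e > 0"
    and g: "\<And>s. \<bar>s\<bar> < e \<Longrightarrow> (g has_real_derivative g' s) (at s)"
    and g': "(g' has_real_derivative c) (at 0)" "g' 0 = 0"
    and max: "\<And>s. \<bar>s\<bar> < e \<Longrightarrow> g s \<le> g 0"
  shows "c \<le> 0"
proof (rule ccontr)
  assume "\<not> c \<le> 0"
  from DERIV_pos_inc_right[OF g'(1)] this obtain d
    where d: "d > 0" "\<And>h. 0 < h \<Longrightarrow> h < d \<Longrightarrow> g' 0 < g' h" by force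
  define h where "h = min d e / 2"
  have h: "0 < h" "h < d" "h < e" using d \<open>e > 0\<close> by (auto simp: h_def)
  obtain z where z: "0 < z" "z < h" "g h - g 0 = h * g' z"
    using MVT2[of 0 h g g'] h g by auto
  have "g' z > 0" using d(2) z h g'(2) by auto
  then have "g h > g 0" using z h by (simp add: algebra_simps)
  then show False using max[of h] h by simp
qed

lemma local_max_gradient_hessian:
  fixes G :: "real^'n::finite \<Rightarrow> real" and DG :: "real^'n \<Rightarrow> real^'n"
  assumes "r > 0"
    and dG: "\<And>y. y \<in> ball x r \<Longrightarrow> (G has_derivative (\<lambda>h. DG y \<bullet> h)) (at y)"
    and dDG: "(DG has_derivative L) (at x)"
    and max: "\<And>y. y \<in> ball x r \<Longrightarrow> G y \<le> G x"
  shows "DG x = 0" and "L (axis i 1) $ i \<le> 0"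
proof -
  have x: "x \<in> ball x r" using \<open>r > 0\<close> by simp
  have "(\<lambda>h. DG x \<bullet> h) = (\<lambda>v. 0)"
    by (rule differential_zero_maxmin[OF x open_ball, where f = G]) (use dG x max in auto)
  then have "DG x \<bullet> DG x = 0" by metis
  then show DG0: "DG x = 0" by simp
  define e :: "real^'n" where "e = axis i 1"
  have inb: "x + s *\<^sub>R e \<in> ball x r" if "\<bar>s\<bar> < r" for s
    using that by (simp add: dist_norm e_def)
  have line: "((\<lambda>s::real. x + s *\<^sub>R e) has_derivative (\<lambda>h. h *\<^sub>R e)) (at s)" for s
    by (auto intro!: derivative_eq_intros)
  show "L (axis i 1) $ i \<le> 0"
  proof (rule DERIV2_nonpos_at_max[where g = "\<lambda>s. G (x + s *\<^sub>R e)" and g' = "\<lambda>s. DG (x + s *\<^sub>R e) $ i"])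
    fix s :: real assume "\<bar>s\<bar> < r"
    from has_derivative_compose[OF line dG[OF inb[OF this]]]
    show "((\<lambda>s. G (x + s *\<^sub>R e)) has_real_derivative DG (x + s *\<^sub>R e) $ i) (at s)"
      by (simp add: has_field_derivative_def e_def inner_axis mult.commute[of _ "DG _ $ i"])
  next
    have "((\<lambda>s. DG (x + s *\<^sub>R e)) has_derivative (\<lambda>h. L (h *\<^sub>R e))) (at 0)"
      using has_derivative_compose[OF line, of DG L 0] dDG by simp
    then have "((\<lambda>s. DG (x + s *\<^sub>R e) $ i) has_derivative (\<lambda>h. L (h *\<^sub>R e) $ i)) (at 0)"
      by (rule bounded_linear.has_derivative[OF bounded_linear_vec_nth])
    moreover have "(\<lambda>h. L (h *\<^sub>R e) $ i) = (*) (L e $ i)"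
      using has_derivative_linear[OF dDG] by (auto simp: fun_eq_iff linear_cmul)
    ultimately show "((\<lambda>s. DG (x + s *\<^sub>R e) $ i) has_real_derivative L (axis i 1) $ i) (at 0)"
      by (simp add: has_field_derivative_def e_def)
  qed (use \<open>r > 0\<close> max inb DG0 in auto)
qed

definition lin_trace :: "(real^'n::finite \<Rightarrow> real^'n) \<Rightarrow> real" where
  "lin_trace L = (\<Sum>i\<in>UNIV. L (axis i 1) $ i)"

lemma lin_trace_matrix: "lin_trace (\<lambda>h. A *v h) = (\<Sum>i\<in>UNIV. A $ i $ i)"
  by (simp add: lin_trace_def matrix_vector_mult_basis column_def)

lemma parabolic_max_conditions:
  fixes f g :: "real^'n::finite \<Rightarrow> real \<Rightarrow> real" and Df Dg :: "real^'n \<Rightarrow> real^'n"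
  assumes "r > 0" "\<eta> > 0"
    and f_x: "\<And>y. y \<in> ball x r \<Longrightarrow> ((\<lambda>y. f y t) has_derivative (\<lambda>h. Df y \<bullet> h)) (at y)"
    and g_x: "\<And>y. y \<in> ball x r \<Longrightarrow> ((\<lambda>y. g y t) has_derivative (\<lambda>h. Dg y \<bullet> h)) (at y)"
    and f_xx: "(Df has_derivative Lf) (at x)" and g_xx: "(Dg has_derivative Lg) (at x)"
    and f_t: "((\<lambda>s. f x s) has_real_derivative ft) (at t)"
    and g_t: "((\<lambda>s. g x s) has_real_derivative gt) (at t)"
    and max_x: "\<And>y. y \<in> ball x r \<Longrightarrow> f y t - g y t \<le> f x t - g x t"
    and max_t: "\<And>s. t - \<eta> < s \<Longrightarrow> s \<le> t \<Longrightarrow> f x s - g x s \<le> f x t - g x t"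
  shows "Df x = Dg x" and "gt \<le> ft" and "lin_trace Lf \<le> lin_trace Lg"
proof -
  have dG: "((\<lambda>y. f y t - g y t) has_derivative (\<lambda>h. (Df y - Dg y) \<bullet> h)) (at y)"
    if "y \<in> ball x r" for y
    using has_derivative_diff[OF f_x[OF that] g_x[OF that]] by (simp add: inner_diff_left)
  have dDG: "((\<lambda>y. Df y - Dg y) has_derivative (\<lambda>h. Lf h - Lg h)) (at x)"
    by (rule has_derivative_diff[OF f_xx g_xx])
  note max_conds = local_max_gradient_hessian[OF \<open>r > 0\<close> dG dDG max_x]
  show "Df x = Dg x" using max_conds(1) by simp
  show "lin_trace Lf \<le> lin_trace Lg"
    using max_conds(2) unfolding lin_trace_def by (intro sum_mono) simp
  show "gt \<le> ft"
    using DERIV_nonneg_at_left_max[OF DERIV_diff[OF f_t g_t] \<open>\<eta> > 0\<close> max_t] by simp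
qed

lemma powr_le_one_plus_square:
  fixes x p :: real
  assumes "0 \<le> p" "p \<le> 2" "0 \<le> x"
  shows "x powr p \<le> 1 + x\<^sup>2"
proof (cases "x \<le> 1")
  case True
  then show ?thesis using powr_le1[of p x] assms by (simp add: add_increasing2)
next
  case False
  then have "x powr p \<le> x powr 2" using assms by (intro powr_mono) auto
  then show ?thesis using False by simp
qed

definition barrier :: "real \<Rightarrow> real \<Rightarrow> real" where
  "barrier c s = ln (c + s - s\<^sup>2) - ln c"

definition barrier' :: "real \<Rightarrow> real \<Rightarrow> real" where
  "barrier' c s = (1 - 2 * s) / (c + s - s\<^sup>2)"

definition barrier'' :: "real \<Rightarrow> real \<Rightarrow> real" where
  "barrier'' c s = - 2 / (c + s - s\<^sup>2) - (barrier' c s)\<^sup>2"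

lemma barrier_arg_bounds:
  fixes c s :: real
  assumes "0 \<le> s" "s \<le> 1"
  shows "c \<le> c + s - s\<^sup>2" and "c + s - s\<^sup>2 \<le> c + 1/4"
proof -
  have "s * s \<le> s * 1" using assms by (intro mult_left_mono) auto
  then show "c \<le> c + s - s\<^sup>2" by (simp add: power2_eq_square)
  have "0 \<le> (s - 1/2)\<^sup>2" by simp
  then show "c + s - s\<^sup>2 \<le> c + 1/4" by (simp add: power2_eq_square algebra_simps)
qed

lemma DERIV_barrier: "0 < c + s - s\<^sup>2 \<Longrightarrow> DERIV (barrier c) s :> barrier' c s"
  unfolding barrier_def barrier'_def
  by (auto intro!: derivative_eq_intros simp: field_simps)

lemma DERIV_barrier':
  assumes "0 < c + s - s\<^sup>2"
  shows "DERIV (barrier' c) s :> barrier'' c s"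
proof -
  define q where "q = c + s - s\<^sup>2"
  have "DERIV (\<lambda>s. (1 - 2 * s) / (c + s - s\<^sup>2)) s
      :> (- 2 * q - (1 - 2 * s) * (1 - 2 * s)) / (q * q)"
    using assms by (auto intro!: derivative_eq_intros simp: q_def power2_eq_square)
  moreover have "(- 2 * q - (1 - 2 * s) * (1 - 2 * s)) / (q * q) = barrier'' c s"
    using assms unfolding barrier''_def barrier'_def q_def[symmetric]
    by (simp add: field_simps power2_eq_square)
  ultimately show ?thesis unfolding barrier'_def[abs_def] by simp
qed

lemma barrier_nonneg: "0 < c \<Longrightarrow> 0 \<le> s \<Longrightarrow> s \<le> 1 \<Longrightarrow> 0 \<le> barrier c s"
  unfolding barrier_def using barrier_arg_bounds(1)[of s c] by simp

lemma barrier_le_linear: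
  assumes "0 < c" "0 \<le> s" "s \<le> 1"
  shows "barrier c s \<le> s / c"
proof -
  have pos: "0 < c + s - s\<^sup>2" using barrier_arg_bounds(1)[of s c] assms by simp
  have "barrier c s = ln ((c + s - s\<^sup>2) / c)" unfolding barrier_def using pos assms by (simp add: ln_div)
  also have "\<dots> \<le> (c + s - s\<^sup>2) / c - 1" using pos assms by (intro ln_le_minus_one) simp
  also have "\<dots> = (s - s\<^sup>2) / c" using assms by (simp add: field_simps)
  also have "\<dots> \<le> s / c" using assms by (simp add: divide_right_mono)
  finally show ?thesis .
qed

lemma le_barrier_half: "M \<le> barrier (exp (- M) / 4) (1/2)"
proof -
  have "ln (1/4) \<le> ln (exp (- M) / 4 + 1/4)" by (subst ln_le_cancel_iff) (simp_all add: add_pos_pos)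
  moreover have "ln (exp (- M) / 4) = - M + ln (1/4)" by (simp add: ln_div)
  ultimately show ?thesis by (simp add: barrier_def power2_eq_square add.commute)
qed

lemma barrier'_bounds:
  assumes "0 < c" "0 \<le> s" "s \<le> 1/2"
  shows "0 \<le> barrier' c s" and "barrier' c s \<le> 1 / c"
proof -
  have arg: "c \<le> c + s - s\<^sup>2" using barrier_arg_bounds(1)[of s c] assms by simp
  show "0 \<le> barrier' c s" unfolding barrier'_def using arg assms by simp
  have "(1 - 2 * s) / (c + s - s\<^sup>2) \<le> 1 / (c + s - s\<^sup>2)" using arg assms by (intro divide_right_mono) auto
  also have "\<dots> \<le> 1 / c" using arg assms by (intro divide_left_mono) auto
  finally show "barrier' c s \<le> 1 / c" unfolding barrier'_def .
qed

lemma barrier''_le: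
  assumes "0 < c" "c \<le> 1/4" "0 \<le> s" "s \<le> 1"
  shows "barrier'' c s \<le> - 4 - (barrier' c s)\<^sup>2"
proof -
  have "0 < c + s - s\<^sup>2" "c + s - s\<^sup>2 \<le> 1/2" using barrier_arg_bounds[of s c] assms by auto
  then have "4 \<le> 2 / (c + s - s\<^sup>2)" by (simp add: field_simps)
  then show ?thesis unfolding barrier''_def by simp
qed

lemma continuous_on_barrier:
  assumes "0 < c"
  shows "continuous_on {0..1} (barrier c)"
proof -
  have "\<forall>s\<in>{0..1}. 0 < c + s - s\<^sup>2"
    using barrier_arg_bounds(1) assms by (fastforce intro: less_le_trans)
  then show ?thesis unfolding barrier_def[abs_def] by (intro continuous_intros) auto
qed

definition penalized_barrier :: "'n::finite \<Rightarrow> real \<Rightarrow> real \<Rightarrow> real^'n \<Rightarrow> real \<Rightarrow> real" where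
  "penalized_barrier k c \<delta> x t = barrier c (x $ k) + \<delta> * (x \<bullet> x) - \<delta> * t"

lemma penalized_barrier_derivatives:
  fixes k :: "'n::finite"
  assumes "0 < c" "0 \<le> x $ k" "x $ k \<le> 1"
  shows "((\<lambda>y. penalized_barrier k c \<delta> y t) has_derivative
            (\<lambda>h. (barrier' c (x $ k) *\<^sub>R axis k 1 + (2 * \<delta>) *\<^sub>R x) \<bullet> h)) (at x)"
    and "((\<lambda>y. barrier' c (y $ k) *\<^sub>R axis k 1 + (2 * \<delta>) *\<^sub>R y) has_derivative
            (\<lambda>h. (barrier'' c (x $ k) * h $ k) *\<^sub>R axis k 1 + (2 * \<delta>) *\<^sub>R h)) (at x)"
    and "((\<lambda>s. penalized_barrier k c \<delta> x s) has_real_derivative - \<delta>) (at t)"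
proof -
  have pos: "0 < c + x $ k - (x $ k)\<^sup>2" using barrier_arg_bounds(1)[of "x $ k" c] assms by simp
  have nth: "((\<lambda>y. y $ k) has_derivative (\<lambda>h. h $ k)) (at x)"
    by (rule bounded_linear_imp_has_derivative[OF bounded_linear_vec_nth])
  have "((\<lambda>y. barrier c (y $ k)) has_derivative (\<lambda>h. barrier' c (x $ k) * h $ k)) (at x)"
    using has_derivative_compose[OF nth DERIV_barrier[OF pos, unfolded has_field_derivative_def]] .
  then have "((\<lambda>y. penalized_barrier k c \<delta> y t) has_derivative
      (\<lambda>h. barrier' c (x $ k) * h $ k + \<delta> * (x \<bullet> h + h \<bullet> x) - 0)) (at x)"
    unfolding penalized_barrier_def
    by (intro has_derivative_diff has_derivative_add has_derivative_mult_right
        has_derivative_inner has_derivative_ident) auto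
  then show "((\<lambda>y. penalized_barrier k c \<delta> y t) has_derivative
      (\<lambda>h. (barrier' c (x $ k) *\<^sub>R axis k 1 + (2 * \<delta>) *\<^sub>R x) \<bullet> h)) (at x)"
    by (simp add: inner_axis inner_commute algebra_simps)
  have "((\<lambda>y. barrier' c (y $ k)) has_derivative (\<lambda>h. barrier'' c (x $ k) * h $ k)) (at x)"
    using has_derivative_compose[OF nth DERIV_barrier'[OF pos, unfolded has_field_derivative_def]] .
  then show "((\<lambda>y. barrier' c (y $ k) *\<^sub>R axis k 1 + (2 * \<delta>) *\<^sub>R y) has_derivative
      (\<lambda>h. (barrier'' c (x $ k) * h $ k) *\<^sub>R axis k 1 + (2 * \<delta>) *\<^sub>R h)) (at x)"
    by (intro has_derivative_add has_derivative_scaleR_left has_derivative_scaleR_right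
        has_derivative_ident)
  show "((\<lambda>s. penalized_barrier k c \<delta> x s) has_real_derivative - \<delta>) (at t)"
    unfolding penalized_barrier_def by (auto intro!: derivative_eq_intros)
qed

lemma lin_trace_penalized_barrier_hessian:
  "lin_trace (\<lambda>h. (a * h $ k) *\<^sub>R axis k 1 + (2 * \<delta>) *\<^sub>R h :: real^'n::finite)
     = a + 2 * \<delta> * CARD('n)"
  by (simp add: lin_trace_def axis_def sum.distrib if_distrib[of "\<lambda>x. _ * x"] cong: if_cong)

text \<open>From \<open>-V'' \<ge> 4 + V'\<^sup>2\<close>; the bound on \<open>\<delta>\<close> keeps the penalisation's contribution below 3.\<close>

lemma penalized_barrier_strict_supersolution:
  fixes x :: "real^'n::finite"
  assumes c: "0 < c" "c \<le> 1/4" and x: "0 \<le> x $ k" "x $ k \<le> 1/2"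
    and \<delta>: "0 < \<delta>" "\<delta> * (x \<bullet> x) \<le> M" "\<delta> * (1 + 2 * CARD('n) + 2 / c + 4 * M) \<le> 1"
  shows "1 + (norm (barrier' c (x $ k) *\<^sub>R axis k 1 + (2 * \<delta>) *\<^sub>R x))\<^sup>2
           < - \<delta> - lin_trace (\<lambda>h. (barrier'' c (x $ k) * h $ k) *\<^sub>R axis k 1 + (2 * \<delta>) *\<^sub>R h)"
proof -
  define v where "v = barrier' c (x $ k)"
  have v: "0 \<le> v" "v \<le> 1 / c" using barrier'_bounds[OF c(1) x] by (auto simp: v_def)
  have "v * x $ k \<le> (1 / c) * (1 / 2)" using v x c by (intro mult_mono) auto
  then have mixed: "\<delta> * (v * x $ k) \<le> \<delta> * (1 / (2 * c))" using \<delta> by (intro mult_left_mono) auto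
  have "(norm (v *\<^sub>R axis k 1 + (2 * \<delta>) *\<^sub>R x))\<^sup>2 = v\<^sup>2 + 4 * (\<delta> * (v * x $ k)) + 4 * (\<delta> * (\<delta> * (x \<bullet> x)))"
    unfolding power2_norm_eq_inner
    by (simp add: inner_axis inner_axis' inner_commute algebra_simps power2_eq_square)
  moreover have "\<delta> * (\<delta> * (x \<bullet> x)) \<le> \<delta> * M" using \<delta> by (intro mult_left_mono) auto
  moreover have "barrier'' c (x $ k) \<le> - 4 - v\<^sup>2" using barrier''_le[OF c] x by (simp add: v_def)
  moreover have "\<delta> * (1 + 2 * CARD('n) + 2 / c + 4 * M)
      = \<delta> + 2 * \<delta> * CARD('n) + 4 * (\<delta> * (1 / (2 * c))) + 4 * (\<delta> * M)"
    using c by (simp add: algebra_simps)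
  ultimately show ?thesis
    using mixed \<delta>(3) by (simp add: lin_trace_penalized_barrier_hessian v_def[symmetric])
qed

lemma closure_Qset: "{x. 0 \<le> x $ k} \<times> {..0::real} \<subseteq> closure (Qset k)"
proof -
  have "halfspace k = {x. axis k 1 \<bullet> x > 0}" by (simp add: halfspace_def inner_axis')
  then have "closure (halfspace k) = {x. axis k (1::real) \<bullet> x \<ge> 0}"
    by (simp del: closure_halfspace_gt add: closure_halfspace_gt)
  then show ?thesis unfolding Qset_def closure_Times by (simp add: inner_axis')
qed

lemma penalized_barrier_less_bounds:
  assumes "0 < c" "0 \<le> x $ k" "x $ k \<le> 1" "0 \<le> \<delta>" "t \<le> 0"
    and "penalized_barrier k c \<delta> x t < v" "v \<le> M"
  shows "\<delta> * (x \<bullet> x) < M" and "- (\<delta> * t) < M"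
proof -
  have "0 \<le> barrier c (x $ k)" using barrier_nonneg assms by simp
  moreover have "0 \<le> \<delta> * (x \<bullet> x)" "0 \<le> - (\<delta> * t)"
    using assms by (simp_all add: mult_nonneg_nonpos)
  ultimately show "\<delta> * (x \<bullet> x) < M" "- (\<delta> * t) < M"
    using assms unfolding penalized_barrier_def by linarith+
qed

text \<open>On the strip \<open>0 \<le> x\<^sub>n \<le> 1/2, t \<le> -\<epsilon>\<close> the difference is nonpositive outside a compact set,
  because the penalisation dominates there.\<close>

lemma penalized_difference_attains_max:
  fixes f :: "real^'n::finite \<Rightarrow> real \<Rightarrow> real" and k :: 'n and c \<delta> :: real
  defines "w \<equiv> \<lambda>x t. f x t - penalized_barrier k c \<delta> x t"
  assumes cont: "continuous_on (closure (Qset k)) (\<lambda>(x,t). f x t)"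
    and le_M: "\<forall>x t. 0 \<le> x $ k \<and> x $ k \<le> 1/2 \<and> t \<le> -\<epsilon> \<longrightarrow> f x t \<le> M"
    and "0 < \<epsilon>" "0 < c" "0 < \<delta>"
    and x0: "0 \<le> x0 $ k" "x0 $ k \<le> 1/2" "t0 \<le> -\<epsilon>" "0 < w x0 t0"
  obtains x t where "0 \<le> x $ k" "x $ k \<le> 1/2" "t \<le> -\<epsilon>"
    and "\<And>y s. 0 \<le> y $ k \<Longrightarrow> y $ k \<le> 1/2 \<Longrightarrow> s \<le> -\<epsilon> \<Longrightarrow> w y s \<le> w x t"
proof -
  have bounds: "\<delta> * (y \<bullet> y) < M \<and> - (\<delta> * s) < M"
    if "0 \<le> y $ k" "y $ k \<le> 1/2" "s \<le> -\<epsilon>" "0 < w y s" for y s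
    using penalized_barrier_less_bounds[OF \<open>0 < c\<close>, of y k \<delta> s "f y s" M] le_M
      that \<open>0 < \<delta>\<close> \<open>0 < \<epsilon>\<close> by (simp add: w_def)
  have "0 < - (\<delta> * t0)" using \<open>0 < \<delta>\<close> \<open>0 < \<epsilon>\<close> x0 by (simp add: mult_pos_neg)
  then have "0 \<le> M / \<delta>" using bounds[OF x0] \<open>0 < \<delta>\<close> by simp
  define K :: "((real^'n) \<times> real) set"
    where "K = (cball 0 (sqrt (M / \<delta>)) \<inter> {x. 0 \<le> x $ k} \<inter> {x. x $ k \<le> 1/2}) \<times> {-\<epsilon> - M / \<delta>..-\<epsilon>}"
  have in_K: "(y, s) \<in> K" if "0 \<le> y $ k" "y $ k \<le> 1/2" "s \<le> -\<epsilon>" "0 < w y s" for y s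
  proof -
    have "y \<bullet> y < M / \<delta>" "- s < M / \<delta>" using bounds[OF that] \<open>0 < \<delta>\<close> by (simp_all add: field_simps)
    then have "norm y < sqrt (M / \<delta>)"
      using real_less_rsqrt[of "norm y" "M / \<delta>"] by (simp add: power2_norm_eq_inner)
    then show ?thesis using that \<open>- s < M / \<delta>\<close> \<open>0 < \<epsilon>\<close> by (auto simp: K_def)
  qed
  have "compact K" unfolding K_def
    by (intro compact_Times compact_Int_closed closed_Collect_le continuous_intros) auto
  moreover have "continuous_on K (\<lambda>z. w (fst z) (snd z))"
  proof -
    have "K \<subseteq> closure (Qset k)" using closure_Qset[of k] \<open>0 < \<epsilon>\<close> by (auto simp: K_def)
    then have "continuous_on K (\<lambda>z. f (fst z) (snd z))"
      using continuous_on_subset[OF cont] by (simp add: case_prod_unfold)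
    moreover have "continuous_on K (\<lambda>z. fst z $ k)" by (intro continuous_intros)
    then have "continuous_on K (\<lambda>z. barrier c (fst z $ k))"
      by (rule continuous_on_compose2[OF continuous_on_barrier[OF \<open>0 < c\<close>]]) (auto simp: K_def)
    ultimately show ?thesis unfolding w_def penalized_barrier_def by (intro continuous_intros)
  qed
  ultimately obtain x1 t1 where z1: "(x1, t1) \<in> K" and max: "\<And>z. z \<in> K \<Longrightarrow> w (fst z) (snd z) \<le> w x1 t1"
    using continuous_attains_sup[of K "\<lambda>z. w (fst z) (snd z)"] in_K[OF x0] by fastforce
  show thesis
  proof (rule that)
    show "0 \<le> x1 $ k" "x1 $ k \<le> 1/2" "t1 \<le> -\<epsilon>" using z1 by (auto simp: K_def)
    show "w y s \<le> w x1 t1" if "0 \<le> y $ k" "y $ k \<le> 1/2" "s \<le> -\<epsilon>" for y s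
      using max[OF in_K[OF that]] max[OF in_K[OF x0]] x0(4) by force
  qed
qed

text \<open>The maximum lies off \<open>x\<^sub>n = 0\<close>, where \<open>f = 0\<close>, and off \<open>x\<^sub>n = 1/2\<close>, where the barrier
  exceeds \<open>M\<close>.\<close>

lemma penalized_difference_interior_max:
  fixes f :: "real^'n::finite \<Rightarrow> real \<Rightarrow> real" and k :: 'n and c \<delta> :: real
  defines "w \<equiv> \<lambda>x t. f x t - penalized_barrier k c \<delta> x t"
  assumes cont: "continuous_on (closure (Qset k)) (\<lambda>(x,t). f x t)"
    and zero: "\<forall>x t. x $ k = 0 \<and> t < 0 \<longrightarrow> f x t = 0"
    and le_M: "\<forall>x t. 0 \<le> x $ k \<and> x $ k \<le> 1/2 \<and> t \<le> -\<epsilon> \<longrightarrow> f x t \<le> M"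
    and "0 < \<epsilon>" "0 < c" "M \<le> barrier c (1/2)" "0 < \<delta>"
    and x0: "0 \<le> x0 $ k" "x0 $ k \<le> 1/2" "t0 \<le> -\<epsilon>" "0 < w x0 t0"
  obtains x t r where "0 < x $ k" "x $ k < 1/2" "t < 0" "\<delta> * (x \<bullet> x) < M" "0 < r"
    and "\<And>y. y \<in> ball x r \<Longrightarrow> 0 < y $ k \<and> y $ k < 1/2"
    and "\<And>y. y \<in> ball x r \<Longrightarrow> w y t \<le> w x t"
    and "\<And>s. t - 1 < s \<Longrightarrow> s \<le> t \<Longrightarrow> w x s \<le> w x t"
proof -
  obtain x1 t1 where x1: "0 \<le> x1 $ k" "x1 $ k \<le> 1/2" "t1 \<le> -\<epsilon>"
    and max: "\<And>y s. 0 \<le> y $ k \<Longrightarrow> y $ k \<le> 1/2 \<Longrightarrow> s \<le> -\<epsilon> \<Longrightarrow> w y s \<le> w x1 t1"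
    using penalized_difference_attains_max[OF cont le_M \<open>0 < \<epsilon>\<close> \<open>0 < c\<close> \<open>0 < \<delta>\<close> x0[unfolded w_def]]
    unfolding w_def by blast
  have t1: "t1 < 0" using x1 \<open>0 < \<epsilon>\<close> by simp
  have w1: "penalized_barrier k c \<delta> x1 t1 < f x1 t1"
    using max[OF x0(1-3)] x0(4) by (simp add: w_def)
  have fM: "f x1 t1 \<le> M" using le_M x1 by blast
  note bounds = penalized_barrier_less_bounds[OF \<open>0 < c\<close> _ _ _ _ w1 fM]
  have "0 \<le> \<delta> * (x1 \<bullet> x1)" using \<open>0 < \<delta>\<close> by simp
  moreover have "0 < - (\<delta> * t1)" using \<open>0 < \<delta>\<close> t1 by (simp add: mult_pos_neg)
  ultimately have penalty: "barrier c (x1 $ k) < penalized_barrier k c \<delta> x1 t1"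
    unfolding penalized_barrier_def by linarith
  have "x1 $ k \<noteq> 0"
  proof
    assume "x1 $ k = 0"
    then show False using penalty w1 zero t1 by (simp add: barrier_def)
  qed
  moreover have "x1 $ k \<noteq> 1/2"
  proof
    assume half: "x1 $ k = 1/2"
    show False using penalty[unfolded half] w1 fM \<open>M \<le> barrier c (1/2)\<close> by linarith
  qed
  ultimately have x1k: "0 < x1 $ k" "x1 $ k < 1/2" using x1 by auto
  define r where "r = min (x1 $ k) (1/2 - x1 $ k)"
  have in_ball: "0 < y $ k \<and> y $ k < 1/2" if "y \<in> ball x1 r" for y
  proof -
    have "\<bar>(y - x1) $ k\<bar> < r"
      using that component_le_norm_cart[of "y - x1" k] by (auto simp: dist_norm norm_minus_commute)
    then show ?thesis by (auto simp: r_def)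
  qed
  show thesis
  proof (rule that[OF x1k t1 _ _ in_ball])
    show "\<delta> * (x1 \<bullet> x1) < M" "0 < r" using bounds x1 x1k t1 \<open>0 < \<delta>\<close> by (auto simp: r_def)
    show "w y t1 \<le> w x1 t1" if "y \<in> ball x1 r" for y
      using max in_ball[OF that] x1 by simp
    show "w x1 s \<le> w x1 t1" if "t1 - 1 < s" "s \<le> t1" for s
      using max x1 that by simp
  qed
qed

definition halfspace_subsolution :: "'n::finite \<Rightarrow> real \<Rightarrow> (real^'n \<Rightarrow> real \<Rightarrow> real) \<Rightarrow> bool" where
  "halfspace_subsolution k p f \<longleftrightarrow>
     continuous_on (closure (Qset k)) (\<lambda>(x,t). f x t) \<and>
     (\<exists>ft Df L. \<forall>x t. (x,t) \<in> Qset k \<longrightarrow>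
        ((\<lambda>s. f x s) has_real_derivative ft x t) (at t) \<and>
        ((\<lambda>y. f y t) has_derivative (\<lambda>h. Df x t \<bullet> h)) (at x) \<and>
        ((\<lambda>y. Df y t) has_derivative L x t) (at x) \<and>
        ft x t - lin_trace (L x t) \<le> norm (Df x t) powr p) \<and>
     (\<forall>x t. x $ k = 0 \<and> t < 0 \<longrightarrow> f x t = 0)"

lemma ancient_sol_imp_subsolution:
  assumes "ancient_sol k p u"
  shows "halfspace_subsolution k p u" and "halfspace_subsolution k p (\<lambda>x t. - u x t)"
proof -
  obtain ut Du D2 where cont: "continuous_on (closure (Qset k)) (\<lambda>(x,t). u x t)"
    and pde: "\<And>x t. (x,t) \<in> Qset k \<Longrightarrow>
           ((\<lambda>s. u x s) has_real_derivative ut x t) (at t) \<and>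
           ((\<lambda>y. u y t) has_derivative (\<lambda>h. Du x t \<bullet> h)) (at x) \<and>
           ((\<lambda>y. Du y t) has_derivative (\<lambda>h. D2 x t *v h)) (at x) \<and>
           ut x t - (\<Sum>i\<in>UNIV. D2 x t $ i $ i) = norm (Du x t) powr p"
    and zero: "\<forall>x t. x $ k = 0 \<and> t < 0 \<longrightarrow> u x t = 0"
    using assms unfolding ancient_sol_def by blast
  show "halfspace_subsolution k p u"
    unfolding halfspace_subsolution_def
    using cont zero pde by (intro conjI exI[of _ ut] exI[of _ Du] exI[of _ "\<lambda>x t h. D2 x t *v h"])
      (auto simp: lin_trace_matrix)
  have "continuous_on (closure (Qset k)) (\<lambda>(x,t). - u x t)"
    using continuous_on_minus[OF cont] by (simp add: case_prod_unfold)
  moreover have "((\<lambda>s. - u x s) has_real_derivative - ut x t) (at t) \<and>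
        ((\<lambda>y. - u y t) has_derivative (\<lambda>h. - Du x t \<bullet> h)) (at x) \<and>
        ((\<lambda>y. - Du y t) has_derivative (\<lambda>h. - (D2 x t *v h))) (at x) \<and>
        - ut x t - lin_trace (\<lambda>h. - (D2 x t *v h)) \<le> norm (- Du x t) powr p"
    if "(x,t) \<in> Qset k" for x t
  proof -
    note uxt = pde[OF that]
    have "((\<lambda>y. - u y t) has_derivative (\<lambda>h. - (Du x t \<bullet> h))) (at x)"
      using uxt by (intro has_derivative_minus) blast
    moreover have "((\<lambda>y. - Du y t) has_derivative (\<lambda>h. - (D2 x t *v h))) (at x)"
      using uxt by (intro has_derivative_minus) blast
    moreover have "lin_trace (\<lambda>h. - (D2 x t *v h)) = - lin_trace (\<lambda>h. D2 x t *v h)"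
      by (simp add: lin_trace_def sum_negf)
    then have "- ut x t - lin_trace (\<lambda>h. - (D2 x t *v h)) = - (norm (- Du x t) powr p)"
      using uxt by (simp add: lin_trace_matrix)
    ultimately show ?thesis using uxt by (auto intro: DERIV_minus)
  qed
  ultimately show "halfspace_subsolution k p (\<lambda>x t. - u x t)"
    unfolding halfspace_subsolution_def using zero
    by (intro conjI exI[of _ "\<lambda>x t. - ut x t"] exI[of _ "\<lambda>x t. - Du x t"]
        exI[of _ "\<lambda>x t h. - (D2 x t *v h)"]) (blast | simp)+
qed

text \<open>A strict supersolution cannot touch a subsolution from above.\<close>

lemma subsolution_minus_penalized_barrier_no_local_max:
  fixes f :: "real^'n::finite \<Rightarrow> real \<Rightarrow> real" and k :: 'n
  assumes sub: "halfspace_subsolution k p f" and p: "0 \<le> p" "p \<le> 2" and c: "0 < c" "c \<le> 1/4"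
    and \<delta>: "0 < \<delta>" "\<delta> * (x \<bullet> x) \<le> M" "\<delta> * (1 + 2 * CARD('n) + 2 / c + 4 * M) \<le> 1"
    and "t < 0" "0 < r" and ball: "\<And>y. y \<in> ball x r \<Longrightarrow> 0 < y $ k \<and> y $ k < 1/2"
    and max_x: "\<And>y. y \<in> ball x r \<Longrightarrow>
        f y t - penalized_barrier k c \<delta> y t \<le> f x t - penalized_barrier k c \<delta> x t"
    and max_t: "\<And>s. t - 1 < s \<Longrightarrow> s \<le> t \<Longrightarrow>
        f x s - penalized_barrier k c \<delta> x s \<le> f x t - penalized_barrier k c \<delta> x t"
  shows False
proof -
  obtain ft Df L where pde: "\<And>x t. (x,t) \<in> Qset k \<Longrightarrow>
        ((\<lambda>s. f x s) has_real_derivative ft x t) (at t) \<and>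
        ((\<lambda>y. f y t) has_derivative (\<lambda>h. Df x t \<bullet> h)) (at x) \<and>
        ((\<lambda>y. Df y t) has_derivative L x t) (at x) \<and>
        ft x t - lin_trace (L x t) \<le> norm (Df x t) powr p"
    using sub unfolding halfspace_subsolution_def by blast
  have Q: "(y, t) \<in> Qset k" if "y \<in> ball x r" for y
    using ball[OF that] \<open>t < 0\<close> by (simp add: Qset_def halfspace_def)
  have x_ball: "x \<in> ball x r" using \<open>0 < r\<close> by simp
  have bk: "0 \<le> y $ k" "y $ k \<le> 1" if "y \<in> ball x r" for y
    using ball[OF that] by auto
  let ?Dg = "\<lambda>y. barrier' c (y $ k) *\<^sub>R axis k 1 + (2 * \<delta>) *\<^sub>R y"
  let ?Lg = "\<lambda>h. (barrier'' c (x $ k) * h $ k) *\<^sub>R axis k 1 + (2 * \<delta>) *\<^sub>R h"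
  note barrier_derivs = penalized_barrier_derivatives[OF c(1)]
  have f_x: "((\<lambda>y. f y t) has_derivative (\<lambda>h. Df y t \<bullet> h)) (at y)" if "y \<in> ball x r" for y
    using pde[OF Q[OF that]] by blast
  have g_x: "((\<lambda>y. penalized_barrier k c \<delta> y t) has_derivative (\<lambda>h. ?Dg y \<bullet> h)) (at y)"
    if "y \<in> ball x r" for y
    using barrier_derivs(1) bk[OF that] by blast
  have f_xx: "((\<lambda>y. Df y t) has_derivative L x t) (at x)"
    and f_t: "((\<lambda>s. f x s) has_real_derivative ft x t) (at t)"
    using pde[OF Q[OF x_ball]] by blast+
  have g_xx: "(?Dg has_derivative ?Lg) (at x)"
    and g_t: "((\<lambda>s. penalized_barrier k c \<delta> x s) has_real_derivative - \<delta>) (at t)"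
    using barrier_derivs(2,3) bk[OF x_ball] by blast+
  note max_conds =
    parabolic_max_conditions[OF \<open>0 < r\<close> zero_less_one f_x g_x f_xx g_xx f_t g_t max_x max_t]
  have "1 + (norm (?Dg x))\<^sup>2 < - \<delta> - lin_trace ?Lg"
    using penalized_barrier_strict_supersolution[OF c _ _ \<delta>] bk[OF x_ball] ball[OF x_ball] by simp
  moreover have "norm (Df x t) powr p \<le> 1 + (norm (Df x t))\<^sup>2"
    using powr_le_one_plus_square p by simp
  ultimately show False using max_conds pde[OF Q[OF x_ball]] by (simp add: less_imp_le)
qed

lemma subsolution_le_barrier:
  fixes f :: "real^'n::finite \<Rightarrow> real \<Rightarrow> real"
  assumes sub: "halfspace_subsolution k p f" and p: "0 \<le> p" "p \<le> 2"
    and le_M: "\<forall>x t. x \<in> Gamma k 1 \<and> t \<le> -\<epsilon> \<longrightarrow> f x t \<le> M"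
    and "0 < \<epsilon>" and c: "0 < c" "c \<le> 1/4" and "M \<le> barrier c (1/2)"
    and x: "0 < x $ k" "x $ k \<le> 1/2" "t \<le> -\<epsilon>"
  shows "f x t \<le> barrier c (x $ k)"
proof (rule ccontr)
  assume "\<not> ?thesis"
  then have \<theta>: "0 < f x t - barrier c (x $ k)" by simp
  have cont: "continuous_on (closure (Qset k)) (\<lambda>(x,t). f x t)"
    and zero: "\<forall>x t. x $ k = 0 \<and> t < 0 \<longrightarrow> f x t = 0"
    using sub unfolding halfspace_subsolution_def by blast+
  have "0 \<le> barrier c (x $ k)" using barrier_nonneg[OF c(1)] x by simp
  moreover have "f x t \<le> M" using le_M x by (simp add: Gamma_def)
  ultimately have "0 < M" using \<theta> by linarith
  have strip_le_M: "\<forall>y s. 0 \<le> y $ k \<and> y $ k \<le> 1/2 \<and> s \<le> -\<epsilon> \<longrightarrow> f y s \<le> M"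
  proof (intro allI impI)
    fix y :: "real^'n" and s :: real
    assume "0 \<le> y $ k \<and> y $ k \<le> 1/2 \<and> s \<le> -\<epsilon>"
    then show "f y s \<le> M"
      using le_M zero \<open>0 < \<epsilon>\<close> \<open>0 < M\<close> by (cases "y $ k = 0") (auto simp: Gamma_def)
  qed
  define B where "B = 1 + 2 * CARD('n) + 2 / c + 4 * M"
  define A where "A = x \<bullet> x - t"
  have "0 < B" using \<open>0 < M\<close> c by (simp add: B_def add_pos_nonneg)
  have "0 < A" unfolding A_def using inner_ge_zero[of x] x \<open>0 < \<epsilon>\<close> by linarith
  define \<delta> where "\<delta> = min (1 / B) ((f x t - barrier c (x $ k)) / (2 * A))"
  have \<delta>: "0 < \<delta>" "\<delta> * B \<le> 1" "\<delta> * A < f x t - barrier c (x $ k)"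
    using \<open>0 < B\<close> \<open>0 < A\<close> \<theta> by (auto simp: \<delta>_def min_def field_simps)
  have "0 < f x t - penalized_barrier k c \<delta> x t"
    using \<delta>(3) by (simp add: penalized_barrier_def A_def algebra_simps)
  with penalized_difference_interior_max[OF cont zero strip_le_M \<open>0 < \<epsilon>\<close> c(1) \<open>M \<le> _\<close> \<delta>(1)] x
  obtain x1 t1 r where "t1 < 0" "\<delta> * (x1 \<bullet> x1) < M" "0 < r"
    and "\<And>y. y \<in> ball x1 r \<Longrightarrow> 0 < y $ k \<and> y $ k < 1/2"
    and "\<And>y. y \<in> ball x1 r \<Longrightarrow>
        f y t1 - penalized_barrier k c \<delta> y t1 \<le> f x1 t1 - penalized_barrier k c \<delta> x1 t1"
    and "\<And>s. t1 - 1 < s \<Longrightarrow> s \<le> t1 \<Longrightarrow>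
        f x1 s - penalized_barrier k c \<delta> x1 s \<le> f x1 t1 - penalized_barrier k c \<delta> x1 t1"
    by (metis less_imp_le)
  then show False
    using subsolution_minus_penalized_barrier_no_local_max[OF sub p c \<delta>(1) _ \<delta>(2)[unfolded B_def]]
    by (meson less_imp_le)
qed

lemma ancient_sol_abs_le_linear:
  fixes u :: "real^'n::finite \<Rightarrow> real \<Rightarrow> real"
  assumes u: "ancient_sol k p u" and p: "0 \<le> p" "p \<le> 2" and "0 < \<epsilon>" "0 \<le> M"
    and le_M: "\<forall>y s. y \<in> Gamma k 1 \<and> s \<le> -\<epsilon> \<longrightarrow> \<bar>u y s\<bar> \<le> M"
    and x: "x \<in> Gamma k 1" "t \<le> -\<epsilon>"
  shows "\<bar>u x t\<bar> \<le> max (4 * exp M) (2 * M) * x $ k"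
proof -
  define c where "c = exp (- M) / 4"
  have c: "0 < c" "c \<le> 1/4" "M \<le> barrier c (1/2)"
    using le_barrier_half[of M] \<open>0 \<le> M\<close> by (auto simp: c_def)
  have xk: "0 < x $ k" "x $ k < 1" using x by (auto simp: Gamma_def)
  show ?thesis
  proof (cases "x $ k \<le> 1/2")
    case True
    have bound: "f x t \<le> barrier c (x $ k)"
      if "halfspace_subsolution k p f" "\<forall>y s. y \<in> Gamma k 1 \<and> s \<le> -\<epsilon> \<longrightarrow> f y s \<le> M" for f
      using subsolution_le_barrier[OF that(1) p that(2) \<open>0 < \<epsilon>\<close> c xk(1) True x(2)] .
    note sub = ancient_sol_imp_subsolution[OF u]
    have "u x t \<le> barrier c (x $ k)" "- u x t \<le> barrier c (x $ k)"
      using bound[OF sub(1)] bound[OF sub(2)] le_M by (auto simp: abs_le_iff)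
    then have "\<bar>u x t\<bar> \<le> (4 * exp M) * x $ k"
      using barrier_le_linear[OF c(1), of "x $ k"] xk by (simp add: c_def exp_minus field_simps)
    then show ?thesis using xk by (smt (verit) max.cobounded1 mult_right_mono)
  next
    case False
    then have "M * 1 \<le> M * (2 * x $ k)" using \<open>0 \<le> M\<close> by (intro mult_left_mono) auto
    moreover have "\<bar>u x t\<bar> \<le> M" using le_M x by blast
    ultimately have "\<bar>u x t\<bar> \<le> (2 * M) * x $ k" by (simp add: mult_ac)
    then show ?thesis using xk by (smt (verit) max.cobounded2 mult_right_mono)
  qed
qed

theorem lemma5p6:
  fixes p M1 :: real
  assumes "1 < p" and "p \<le> 2"
  shows "\<exists>C>0. \<forall>(k::'n::finite) (u :: real^'n \<Rightarrow> real \<Rightarrow> real) (\<epsilon>::real).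
           \<epsilon> > 0 \<and> ancient_sol k p u \<and>
           bdd_above ((\<lambda>(x,t). \<bar>u x t\<bar>) ` (Gamma k 1 \<times> {..-\<epsilon>})) \<and>
           (SUP z\<in>Gamma k 1 \<times> {..-\<epsilon>}. \<bar>u (fst z) (snd z)\<bar>) = M1
           \<longrightarrow> (\<forall>x t. x \<in> Gamma k 1 \<and> t \<le> -\<epsilon> \<longrightarrow> \<bar>u x t\<bar> \<le> C * x $ k)"
proof (intro exI[of _ "max (4 * exp (max M1 0)) (2 * max M1 0)"] conjI allI impI)
  show "0 < max (4 * exp (max M1 0)) (2 * max M1 0)" by (simp add: less_max_iff_disj)
  fix k :: 'n and u \<epsilon> x t
  assume H: "\<epsilon> > 0 \<and> ancient_sol k p u \<and>
           bdd_above ((\<lambda>(x,t). \<bar>u x t\<bar>) ` (Gamma k 1 \<times> {..-\<epsilon>})) \<and>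
           (SUP z\<in>Gamma k 1 \<times> {..-\<epsilon>}. \<bar>u (fst z) (snd z)\<bar>) = M1"
    and x: "x \<in> Gamma k 1 \<and> t \<le> -\<epsilon>"
  have "\<forall>y s. y \<in> Gamma k 1 \<and> s \<le> -\<epsilon> \<longrightarrow> \<bar>u y s\<bar> \<le> max M1 0"
    using H cSUP_upper[of _ "Gamma k 1 \<times> {..-\<epsilon>}" "\<lambda>z. \<bar>u (fst z) (snd z)\<bar>"]
    by (fastforce simp: case_prod_unfold intro: le_max_iff_disj[THEN iffD2])
  then show "\<bar>u x t\<bar> \<le> max (4 * exp (max M1 0)) (2 * max M1 0) * x $ k"
    using ancient_sol_abs_le_linear[of k p u \<epsilon> "max M1 0"] H x assms by simp
qed

end
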